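(* The language ${\rm ss}(\{0,1\}^* )=\bigcup_{x\in\{0,1\}^*}(x \,\text{ш}\, x)$ is not context-free. In particular, there is a regular language $L$ such that ${\rm ss}(L)$ is not context-free.
   Context: For words $x,y$, the (ordinary) shuffle $x \,\text{ш}\, y$ is the finite set of all words $z = x_1y_1x_2y_2\cdots x_ny_n$ for some $n\ge 1$ and words $x_1,\dots,x_n,y_1,\dots,y_n$ (possibly empty) with $x=x_1\cdots x_n$ and $y=y_1\cdots y_n$. For a language $L$, ${\rm ss}(L)=\bigcup_{x\in L}(x\,\text{ш}\,x)$. *)

theory Defs
  imports Main
begin

text \<open>Words over the binary alphabet {0,1} are modelled as bool lists.
  The ordinary shuffle is the library's shuffles.\<close>

definition self_shuffle :: "'t list set \<Rightarrow> 't list set" where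
  "self_shuffle L = (\<Union>x\<in>L. shuffles x x)"

text \<open>Context-free grammars: a finite set of productions A -> alpha with
  nonterminals (nat) and terminals 't; sentential forms are lists of
  Inl nonterminal / Inr terminal.\<close>

inductive cfg_step :: "(nat \<times> (nat + 't) list) set \<Rightarrow> (nat + 't) list \<Rightarrow> (nat + 't) list \<Rightarrow> bool"
  for P where
  "(A, alpha) \<in> P \<Longrightarrow> cfg_step P (u @ [Inl A] @ v) (u @ alpha @ v)"

definition cfg_lang :: "(nat \<times> (nat + 't) list) set \<Rightarrow> nat \<Rightarrow> 't list set" where
  "cfg_lang P S = {w. (cfg_step P)\<^sup>*\<^sup>* [Inl S] (map Inr w)}"

definition context_free :: "'t list set \<Rightarrow> bool" where
  "context_free L \<longleftrightarrow> (\<exists>P S. finite P \<and> L = cfg_lang P S)"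

definition regular :: "'t list set \<Rightarrow> bool" where
  "regular L \<longleftrightarrow> (\<exists>(Q::nat set) \<delta> q0 F. finite Q \<and> q0 \<in> Q \<and> F \<subseteq> Q \<and>
      (\<forall>q\<in>Q. \<forall>a. \<delta> q a \<in> Q) \<and> L = {w. foldl \<delta> q0 w \<in> F})"

end

theory Submission
  imports Defs
begin

text \<open>The proof applies the pumping lemma to  z = 0^q 1^q 0^q 1^q  with  q  odd and larger than
  the pumping constant;  z  is the shuffle of  0^q 1^q  with itself.  It yields strong constraints on self-shuffles of block words
    0^a 1^P 0^t 1^s 0^Q 1^e  with  a  odd.
  \<^item> Since the pumping window is shorter than  q, it lies within two adjacent blocks of  z.
    For each position, pumping down or up produces a block word violating those
    constraints (or the parity of letter counts).
  \<^item> The main theorem combines this with the regularity of  {0,1}^* .\<close>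

datatype 't ptree = Lf 't | Nd nat "'t ptree list"

fun root :: "'t ptree \<Rightarrow> nat + 't" where
  "root (Lf a) = Inr a"
| "root (Nd A ts) = Inl A"

fun fringe :: "'t ptree \<Rightarrow> 't list" where
  "fringe (Lf a) = [a]"
| "fringe (Nd A ts) = concat (map fringe ts)"

fun valid :: "(nat \<times> (nat + 't) list) set \<Rightarrow> 't ptree \<Rightarrow> bool" where
  "valid P (Lf a) = True"
| "valid P (Nd A ts) = ((A, map root ts) \<in> P \<and> (\<forall>t\<in>set ts. valid P t))"

fun tsize :: "'t ptree \<Rightarrow> nat" where
  "tsize (Lf a) = 1"
| "tsize (Nd A ts) = Suc (sum_list (map tsize ts))"

lemma derivation_forest:
  assumes "(cfg_step P)\<^sup>*\<^sup>* \<alpha> (map Inr w)"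
  shows "\<exists>ts. map root ts = \<alpha> \<and> (\<forall>t\<in>set ts. valid P t) \<and> concat (map fringe ts) = w"
  using assms
proof (induction rule: converse_rtranclp_induct)
  case base
  show ?case by (rule exI[of _ "map Lf w"]) (simp add: comp_def)
next
  case (step \<alpha> \<alpha>')
  from step.hyps(1) obtain u A v \<gamma> where
    e: "\<alpha> = u @ [Inl A] @ v" "\<alpha>' = u @ \<gamma> @ v" "(A, \<gamma>) \<in> P"
    by (cases rule: cfg_step.cases) blast
  from step.IH obtain ts where
    ts: "map root ts = \<alpha>'" "\<forall>t\<in>set ts. valid P t" "concat (map fringe ts) = w"
    by blast
  from ts(1) e(2) have "map root ts = u @ (\<gamma> @ v)" by simp
  then obtain ts1 ts' where
    split1: "ts = ts1 @ ts'" "u = map root ts1" "\<gamma> @ v = map root ts'"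
    by (auto dest: map_eq_append_conv[THEN iffD1])
  from split1(3)[symmetric] obtain ts2 ts3 where
    split2: "ts' = ts2 @ ts3" "\<gamma> = map root ts2" "v = map root ts3"
    by (auto dest: map_eq_append_conv[THEN iffD1])
  show ?case
    by (rule exI[of _ "ts1 @ [Nd A ts2] @ ts3"]) (use ts split1 split2 e in auto)
qed

lemma cfg_step_append:
  "cfg_step P a b \<Longrightarrow> cfg_step P (x @ a @ y) (x @ b @ y)"
proof (induction rule: cfg_step.induct)
  case (1 A alpha u v)
  have "cfg_step P ((x @ u) @ [Inl A] @ (v @ y)) ((x @ u) @ alpha @ (v @ y))"
    using 1 by (rule cfg_step.intros)
  then show ?case by simp
qed

lemma cfg_steps_append:
  "(cfg_step P)\<^sup>*\<^sup>* a b \<Longrightarrow> (cfg_step P)\<^sup>*\<^sup>* (x @ a @ y) (x @ b @ y)"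
  by (induction rule: rtranclp_induct) (auto intro: rtranclp.rtrancl_into_rtrancl cfg_step_append)

lemma forest_derivation:
  "(\<forall>t\<in>set ts. (cfg_step P)\<^sup>*\<^sup>* [root t] (map Inr (fringe t))) \<Longrightarrow>
   (cfg_step P)\<^sup>*\<^sup>* (map root ts) (map Inr (concat (map fringe ts)))"
proof (induction ts)
  case Nil
  then show ?case by simp
next
  case (Cons t ts)
  have "(cfg_step P)\<^sup>*\<^sup>* ([] @ [root t] @ map root ts) ([] @ map Inr (fringe t) @ map root ts)"
    using Cons.prems by (intro cfg_steps_append) simp
  moreover have "(cfg_step P)\<^sup>*\<^sup>* (map Inr (fringe t) @ map root ts @ [])
      (map Inr (fringe t) @ map Inr (concat (map fringe ts)) @ [])"
    using Cons by (intro cfg_steps_append) simp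
  ultimately show ?case by simp
qed

lemma tree_derivation: "valid P t \<Longrightarrow> (cfg_step P)\<^sup>*\<^sup>* [root t] (map Inr (fringe t))"
proof (induction t)
  case (Lf a)
  then show ?case by simp
next
  case (Nd A ts)
  have "cfg_step P ([] @ [Inl A] @ []) ([] @ map root ts @ [])"
    using Nd.prems by (intro cfg_step.intros) simp
  moreover have "(cfg_step P)\<^sup>*\<^sup>* (map root ts) (map Inr (concat (map fringe ts)))"
    using Nd by (intro forest_derivation) auto
  ultimately show ?case by simp
qed

lemma cfg_lang_iff_tree:
  "w \<in> cfg_lang P S \<longleftrightarrow> (\<exists>t. valid P t \<and> root t = Inl S \<and> fringe t = w)"
proof
  assume "w \<in> cfg_lang P S"
  then have "(cfg_step P)\<^sup>*\<^sup>* [Inl S] (map Inr w)" by (simp add: cfg_lang_def)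
  from derivation_forest[OF this] obtain ts where
    ts: "map root ts = [Inl S]" "\<forall>t\<in>set ts. valid P t" "concat (map fringe ts) = w"
    by (elim exE conjE)
  from ts(1) obtain t where "ts = [t]" by (cases ts) auto
  with ts show "\<exists>t. valid P t \<and> root t = Inl S \<and> fringe t = w" by auto
next
  assume "\<exists>t. valid P t \<and> root t = Inl S \<and> fringe t = w"
  then show "w \<in> cfg_lang P S" by (auto simp: cfg_lang_def dest: tree_derivation)
qed

text \<open>One-hole contexts: a tree with a single subtree cut out.  Plugging a context
  into itself repeatedly is the pumping operation.\<close>

datatype 't ctx = Hole | CNd nat "'t ptree list" "'t ctx" "'t ptree list"

fun fill :: "'t ctx \<Rightarrow> 't ptree \<Rightarrow> 't ptree" where
  "fill Hole s = s"
| "fill (CNd A l c r) s = Nd A (l @ [fill c s] @ r)"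

fun left_fringe :: "'t ctx \<Rightarrow> 't list" where
  "left_fringe Hole = []"
| "left_fringe (CNd A l c r) = concat (map fringe l) @ left_fringe c"

fun right_fringe :: "'t ctx \<Rightarrow> 't list" where
  "right_fringe Hole = []"
| "right_fringe (CNd A l c r) = right_fringe c @ concat (map fringe r)"

fun csize :: "'t ctx \<Rightarrow> nat" where
  "csize Hole = 0"
| "csize (CNd A l c r) = Suc (sum_list (map tsize l) + csize c + sum_list (map tsize r))"

lemma fringe_fill: "fringe (fill c s) = left_fringe c @ fringe s @ right_fringe c"
  by (induction c) auto

lemma tsize_fill: "tsize (fill c s) = csize c + tsize s"
  by (induction c) auto

lemma root_fill: "root s = root s' \<Longrightarrow> root (fill c s) = root (fill c s')"
  by (cases c) auto

lemma valid_fill: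
  "valid P (fill c s) \<Longrightarrow> root s = root s' \<Longrightarrow> valid P s' \<Longrightarrow> valid P (fill c s')"
proof (induction c)
  case Hole
  then show ?case by simp
next
  case (CNd A l c r)
  have "root (fill c s) = root (fill c s')" using CNd.prems(2) by (rule root_fill)
  with CNd show ?case by auto
qed

lemma valid_fill_sub: "valid P (fill c s) \<Longrightarrow> valid P s"
  by (induction c) auto

fun iterate_ctx :: "'t ctx \<Rightarrow> nat \<Rightarrow> 't ptree \<Rightarrow> 't ptree" where
  "iterate_ctx c 0 s = s"
| "iterate_ctx c (Suc n) s = fill c (iterate_ctx c n s)"

lemma iterate_ctx:
  assumes "valid P (fill c s)" "root (fill c s) = root s"
  shows "valid P (iterate_ctx c n s) \<and> root (iterate_ctx c n s) = root s \<and>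
    fringe (iterate_ctx c n s) =
      concat (replicate n (left_fringe c)) @ fringe s @ concat (replicate n (right_fringe c))"
proof (induction n)
  case 0
  then show ?case using valid_fill_sub[OF assms(1)] by simp
next
  case (Suc n)
  have "valid P (fill c (iterate_ctx c n s))" using valid_fill[OF assms(1)] Suc by simp
  moreover have "root (fill c (iterate_ctx c n s)) = root s"
    using root_fill[of "iterate_ctx c n s" s c] Suc assms(2) by simp
  moreover have "concat (replicate (Suc n) r) = concat (replicate n r) @ r" for r :: "'a list"
    by (induction n) auto
  ultimately show ?case using Suc by (simp add: fringe_fill)
qed

lemma pump_tree:
  assumes "valid P (fill c1 (fill c2 T))" "root (fill c2 T) = root T"
  shows "valid P (fill c1 (iterate_ctx c2 i T)) \<and>
    root (fill c1 (iterate_ctx c2 i T)) = root (fill c1 (fill c2 T)) \<and>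
    fringe (fill c1 (iterate_ctx c2 i T)) =
      left_fringe c1 @ concat (replicate i (left_fringe c2)) @ fringe T @
      concat (replicate i (right_fringe c2)) @ right_fringe c1"
proof -
  have v2: "valid P (fill c2 T)" using valid_fill_sub[OF assms(1)] .
  note it = iterate_ctx[OF v2 assms(2), of i]
  have r: "root (fill c2 T) = root (iterate_ctx c2 i T)" using it assms(2) by simp
  show ?thesis
    using valid_fill[OF assms(1) r] it root_fill[OF r, of c1] by (simp add: fringe_fill)
qed

text \<open>A tree has no repeated nonterminal on any root-to-leaf path iff  no_repeat {}  holds;
  the parameter collects the labels already seen on the path.\<close>

fun no_repeat :: "nat set \<Rightarrow> 't ptree \<Rightarrow> bool" where
  "no_repeat X (Lf a) = True"
| "no_repeat X (Nd A ts) = (A \<notin> X \<and> (\<forall>t\<in>set ts. no_repeat (insert A X) t))"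

fun labels :: "'t ptree \<Rightarrow> nat set" where
  "labels (Lf a) = {}"
| "labels (Nd A ts) = insert A (\<Union>t\<in>set ts. labels t)"

lemma no_repeat_iff: "no_repeat X t \<longleftrightarrow> no_repeat {} t \<and> labels t \<inter> X = {}"
proof (induction t arbitrary: X)
  case (Lf a)
  then show ?case by simp
next
  case (Nd A ts)
  have IH_X: "no_repeat (insert A X) t \<longleftrightarrow> no_repeat {} t \<and> labels t \<inter> insert A X = {}"
    and IH_A: "no_repeat {A} t \<longleftrightarrow> no_repeat {} t \<and> labels t \<inter> {A} = {}"
    if "t \<in> set ts" for t
    using Nd.IH[OF that, of "insert A X"] Nd.IH[OF that, of "{A}"] by simp_all
  have "no_repeat X (Nd A ts) \<longleftrightarrow> A \<notin> X \<and> (\<forall>t\<in>set ts. no_repeat (insert A X) t)"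
    by simp
  moreover have "no_repeat {} (Nd A ts) \<longleftrightarrow> (\<forall>t\<in>set ts. no_repeat {A} t)" by simp
  moreover have "labels (Nd A ts) \<inter> X = {} \<longleftrightarrow> A \<notin> X \<and> (\<forall>t\<in>set ts. labels t \<inter> X = {})"
    by auto
  ultimately show ?case using IH_X IH_A by blast
qed

lemma labels_ctx: "A \<in> labels t \<Longrightarrow> \<exists>c ts'. t = fill c (Nd A ts')"
proof (induction t)
  case (Lf a)
  then show ?case by simp
next
  case (Nd B ts)
  show ?case
  proof (cases "A = B")
    case True
    then show ?thesis by (intro exI[of _ Hole]) auto
  next
    case False
    with Nd.prems obtain s where s: "s \<in> set ts" "A \<in> labels s" by auto
    from Nd.IH[OF s] obtain c ts' where c: "s = fill c (Nd A ts')" by blast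
    from split_list[OF s(1)] obtain l r where "ts = l @ s # r" by blast
    then show ?thesis using c by (intro exI[of _ "CNd B l c r"]) auto
  qed
qed

lemma lowest_repeat:
  "\<not> no_repeat {} t \<Longrightarrow> \<exists>c A ts. t = fill c (Nd A ts) \<and>
     (\<forall>s\<in>set ts. no_repeat {} s) \<and> (\<exists>s\<in>set ts. A \<in> labels s)"
proof (induction t)
  case (Lf a)
  then show ?case by simp
next
  case (Nd B ts)
  show ?case
  proof (cases "\<exists>s\<in>set ts. \<not> no_repeat {} s")
    case True
    then obtain s where s: "s \<in> set ts" "\<not> no_repeat {} s" by blast
    from Nd.IH[OF s] obtain c A ts' where c: "s = fill c (Nd A ts')"
      "\<forall>s\<in>set ts'. no_repeat {} s" "\<exists>s\<in>set ts'. A \<in> labels s" by blast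
    from split_list[OF s(1)] obtain l r where "ts = l @ s # r" by blast
    then show ?thesis using c by (intro exI[of _ "CNd B l c r"]) auto
  next
    case False
    then have children: "\<forall>s\<in>set ts. no_repeat {} s" by blast
    from Nd.prems obtain s where "s \<in> set ts" "\<not> no_repeat {B} s" by auto
    then have "B \<in> labels s" using children no_repeat_iff[of "{B}" s] by auto
    then show ?thesis using children \<open>s \<in> set ts\<close> by (intro exI[of _ Hole]) auto
  qed
qed

lemma repeated_nonterminal:
  assumes "\<not> no_repeat {} t"
  shows "\<exists>c1 c2 T A ts. t = fill c1 (fill c2 T) \<and> fill c2 T = Nd A ts \<and> c2 \<noteq> Hole \<and>
    root T = Inl A \<and> (\<forall>s\<in>set ts. no_repeat {} s)"
proof -
  from lowest_repeat[OF assms] obtain c1 A ts where c1: "t = fill c1 (Nd A ts)"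
    "\<forall>s\<in>set ts. no_repeat {} s" and "\<exists>s\<in>set ts. A \<in> labels s" by blast
  then obtain s where s: "s \<in> set ts" "A \<in> labels s" by blast
  from labels_ctx[OF s(2)] obtain c ts' where c: "s = fill c (Nd A ts')" by blast
  from split_list[OF s(1)] obtain l r where "ts = l @ s # r" by blast
  then have "fill (CNd A l c r) (Nd A ts') = Nd A ts" using c by simp
  then show ?thesis using c1 by (intro exI[of _ c1] exI[of _ "CNd A l c r"]) auto
qed

lemma labels_valid: "valid P t \<Longrightarrow> labels t \<subseteq> fst ` P"
proof (induction t)
  case (Lf a)
  then show ?case by simp
next
  case (Nd A ts)
  then have "A \<in> fst ` P" by (force intro: rev_image_eqI)
  with Nd show ?case by auto
qed

lemma length_fringe_Nd:
  assumes "\<forall>t\<in>set ts. length (fringe t) \<le> B"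
  shows "length (fringe (Nd A ts)) \<le> length ts * B"
proof -
  have "length (fringe (Nd A ts)) = (\<Sum>t\<leftarrow>ts. length (fringe t))" by (simp add: length_concat comp_def)
  also have "\<dots> \<le> (\<Sum>t\<leftarrow>ts. B)" using assms by (intro sum_list_mono) simp
  also have "\<dots> = length ts * B" by (simp add: sum_list_triv)
  finally show ?thesis .
qed

text \<open>Without repetitions the height is at most the number of nonterminals, so the
  fringe length is at most  m ^ (number of nonterminals)  when right-hand sides have length
  at most  m.\<close>

lemma no_repeat_fringe_bound:
  assumes "finite N" and "m \<ge> 1" and "\<forall>(A, \<gamma>)\<in>P. length \<gamma> \<le> m"
  shows "valid P t \<Longrightarrow> no_repeat X t \<Longrightarrow> labels t \<subseteq> N \<Longrightarrow>
    length (fringe t) \<le> m ^ card (N - X)"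
proof (induction t arbitrary: X)
  case (Lf a)
  then show ?case using assms(2) by simp
next
  case (Nd A ts)
  let ?c = "card (N - X)"
  have A: "A \<in> N - X" using Nd.prems by auto
  then have "?c \<ge> 1" using assms(1) by (auto simp: Suc_le_eq card_gt_0_iff)
  have "N - insert A X = (N - X) - {A}" by auto
  then have card_child: "card (N - insert A X) = ?c - 1" using A assms(1) by simp
  have "length (fringe t) \<le> m ^ (?c - 1)" if "t \<in> set ts" for t
    using Nd.IH[OF that, of "insert A X"] Nd.prems that card_child by auto
  then have "length (fringe (Nd A ts)) \<le> length ts * m ^ (?c - 1)"
    by (intro length_fringe_Nd) blast
  also have "\<dots> \<le> m * m ^ (?c - 1)"
  proof -
    have "(A, map root ts) \<in> P" using Nd.prems(1) by simp
    then have "length ts \<le> m" using assms(3) by fastforce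
    then show ?thesis by simp
  qed
  also have "\<dots> = m ^ ?c" using \<open>?c \<ge> 1\<close> by (cases ?c) auto
  finally show ?case .
qed

definition rhs_bound :: "(nat \<times> (nat + 't) list) set \<Rightarrow> nat" where
  "rhs_bound P = Max (insert 1 ((length \<circ> snd) ` P))"

lemma rhs_bound:
  assumes "finite P"
  shows "1 \<le> rhs_bound P" and "\<forall>(A, \<gamma>)\<in>P. length \<gamma> \<le> rhs_bound P"
proof -
  have fin: "finite (insert 1 ((length \<circ> snd) ` P))" using assms by simp
  show "1 \<le> rhs_bound P" unfolding rhs_bound_def using Max_ge[OF fin] by simp
  show "\<forall>(A, \<gamma>)\<in>P. length \<gamma> \<le> rhs_bound P"
  proof (intro ballI, clarify)
    fix A \<gamma> assume "(A, \<gamma>) \<in> P"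
    then have "length \<gamma> \<in> insert 1 ((length \<circ> snd) ` P)" by (auto intro: rev_image_eqI)
    then show "length \<gamma> \<le> rhs_bound P" unfolding rhs_bound_def using Max_ge[OF fin] by blast
  qed
qed

lemma no_repeat_tree_bound:
  assumes "finite P" "valid P t" "no_repeat {} t"
  shows "length (fringe t) \<le> rhs_bound P ^ card (fst ` P)"
  using no_repeat_fringe_bound[OF _ rhs_bound[OF assms(1)], of "fst ` P" t "{}"]
    assms labels_valid[OF assms(2)] by simp

lemma lowest_repeat_bound:
  assumes "finite P" "valid P (Nd A ts)" "\<forall>s\<in>set ts. no_repeat {} s"
  shows "length (fringe (Nd A ts)) \<le> rhs_bound P ^ Suc (card (fst ` P))"
proof -
  have "length (fringe (Nd A ts)) \<le> length ts * rhs_bound P ^ card (fst ` P)"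
    using no_repeat_tree_bound[OF assms(1)] assms(2,3) by (intro length_fringe_Nd) simp
  also have "\<dots> \<le> rhs_bound P * rhs_bound P ^ card (fst ` P)"
  proof -
    have "(A, map root ts) \<in> P" using assms(2) by simp
    then have "length ts \<le> rhs_bound P" using rhs_bound(2)[OF assms(1)] by fastforce
    then show ?thesis by simp
  qed
  finally show ?thesis by simp
qed

text \<open>The pumping lemma for context-free languages: take a parse tree of minimal size; if
  its fringe is long it contains a repeated nonterminal, and the lowest repetition gives the
  pumpable decomposition.  Minimality of the tree makes the pumped parts non-empty.\<close>

theorem pumping_lemma:
  assumes "finite P"
  shows "\<exists>p. \<forall>w \<in> cfg_lang P S. p < length w \<longrightarrow>
    (\<exists>u v w' x y. w = u @ v @ w' @ x @ y \<and> v @ x \<noteq> [] \<and> length (v @ w' @ x) \<le> p \<and>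
       (\<forall>i. u @ concat (replicate i v) @ w' @ concat (replicate i x) @ y \<in> cfg_lang P S))"
proof (rule exI[of _ "rhs_bound P ^ Suc (card (fst ` P))"], intro ballI impI)
  let ?p = "rhs_bound P ^ Suc (card (fst ` P))"
  fix w assume "w \<in> cfg_lang P S" and long: "?p < length w"
  let ?tree = "\<lambda>t. valid P t \<and> root t = Inl S \<and> fringe t = w"
  from \<open>w \<in> cfg_lang P S\<close> obtain t where "?tree t" unfolding cfg_lang_iff_tree by blast
  then obtain t0 where t0: "?tree t0" and minimal: "\<And>t. ?tree t \<Longrightarrow> tsize t0 \<le> tsize t"
    using ex_has_least_nat[of ?tree t tsize] by blast
  have "\<not> no_repeat {} t0"
  proof
    assume "no_repeat {} t0"
    then have "length w \<le> rhs_bound P ^ card (fst ` P)"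
      using no_repeat_tree_bound[OF assms] t0 by blast
    also have "\<dots> \<le> ?p" using rhs_bound(1)[OF assms] by (simp add: power_increasing)
    finally show False using long by simp
  qed
  from repeated_nonterminal[OF this] obtain c1 c2 T A ts where
    c: "t0 = fill c1 (fill c2 T)" "fill c2 T = Nd A ts" "c2 \<noteq> Hole" "root T = Inl A"
      "\<forall>s\<in>set ts. no_repeat {} s"
    by blast
  have root_c2: "root (fill c2 T) = root T" using c(2,4) by simp
  have pumped: "?tree (fill c1 (iterate_ctx c2 i T)) \<longleftrightarrow>
    w = left_fringe c1 @ concat (replicate i (left_fringe c2)) @ fringe T @
      concat (replicate i (right_fringe c2)) @ right_fringe c1" for i
    using pump_tree[OF _ root_c2, of P c1 i] t0 c(1) by auto
  have "left_fringe c2 @ right_fringe c2 \<noteq> []"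
  proof
    assume "left_fringe c2 @ right_fringe c2 = []"
    then have "?tree (fill c1 (iterate_ctx c2 0 T))"
      using pumped[of 1] pumped[of 0] t0 c(1) by (simp add: fringe_fill)
    then have "tsize t0 \<le> tsize (fill c1 T)" using minimal by simp
    moreover have "tsize (fill c1 T) < tsize t0" using c(1,3) by (cases c2) (auto simp: tsize_fill)
    ultimately show False by simp
  qed
  moreover have "length (left_fringe c2 @ fringe T @ right_fringe c2) \<le> ?p"
    using lowest_repeat_bound[OF assms, of A ts] t0 c(1,2,5) valid_fill_sub[of P c1 "fill c2 T"]
    by (simp add: fringe_fill[of c2 T, symmetric])
  moreover have "w = left_fringe c1 @ left_fringe c2 @ fringe T @ right_fringe c2 @ right_fringe c1"
    using pumped[of 1] t0 c(1) by (simp add: fringe_fill)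
  moreover have "left_fringe c1 @ concat (replicate i (left_fringe c2)) @ fringe T @
      concat (replicate i (right_fringe c2)) @ right_fringe c1 \<in> cfg_lang P S" for i
    using pumped[of i] t0 c(1) pump_tree[OF _ root_c2, of P c1 i] by (auto simp: cfg_lang_iff_tree)
  ultimately show "\<exists>u v w' x y. w = u @ v @ w' @ x @ y \<and> v @ x \<noteq> [] \<and>
      length (v @ w' @ x) \<le> ?p \<and>
      (\<forall>i. u @ concat (replicate i v) @ w' @ concat (replicate i x) @ y \<in> cfg_lang P S)"
    by blast
qed

text \<open>Reading a word  z \<in> shuffles x x  from left to right, the two copies of  x  are
  consumed at different speeds; the part  b  by which the faster copy is ahead of the slower
  one is the state of a (nondeterministic) left-to-right recognizer.  ahead z  collects the
  possible states when  z  remains to be read.\<close>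

definition ahead :: "'a list \<Rightarrow> 'a list set" where
  "ahead z = {b. \<exists>x. z \<in> shuffles (b @ x) x}"

lemma ahead_start: "z \<in> shuffles x x \<Longrightarrow> [] \<in> ahead z"
  by (auto simp: ahead_def)

lemma ahead_Nil: "b \<in> ahead [] \<Longrightarrow> b = []"
  by (auto simp: ahead_def)

text \<open>Reading one letter  c : either the slower copy consumes it (then it must be the
  first letter of the lead) or the faster copy does (then the lead grows by  c).\<close>

lemma ahead_Cons:
  assumes "b \<in> ahead (c # z)"
  shows "(b \<noteq> [] \<and> hd b = c \<and> tl b \<in> ahead z) \<or> b @ [c] \<in> ahead z"
proof -
  from assms obtain x where x: "c # z \<in> shuffles (b @ x) x" by (auto simp: ahead_def)
  from x[unfolded Cons_in_shuffles_iff] show ?thesis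
  proof
    assume h: "b @ x \<noteq> [] \<and> hd (b @ x) = c \<and> z \<in> shuffles (tl (b @ x)) x"
    show ?thesis
    proof (cases b)
      case Nil
      with h obtain x' where "x = c # x'" "z \<in> shuffles x' (c # x')"
        by (cases x) auto
      then have "z \<in> shuffles ([c] @ x') x'" by (simp add: shuffles_commutes)
      then show ?thesis using Nil by (auto simp: ahead_def)
    next
      case (Cons b0 bs)
      with h show ?thesis by (auto simp: ahead_def)
    qed
  next
    assume h: "x \<noteq> [] \<and> hd x = c \<and> z \<in> shuffles (b @ x) (tl x)"
    then obtain x' where "x = c # x'" "z \<in> shuffles (b @ c # x') x'" by (cases x) auto
    then have "z \<in> shuffles ((b @ [c]) @ x') x'" by simp
    then show ?thesis by (auto simp: ahead_def)
  qed
qed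

text \<open>Reading a block  c^n : the slower copy consumes  i  letters from the lead, the rest
  of the block is appended to it.\<close>

lemma ahead_replicate:
  "b \<in> ahead (replicate n c @ z) \<Longrightarrow>
   \<exists>i\<le>n. take i (b @ replicate (n - i) c) = replicate i c \<and>
         drop i (b @ replicate (n - i) c) \<in> ahead z"
proof (induction n arbitrary: b)
  case 0
  then show ?case by auto
next
  case (Suc n)
  from ahead_Cons[of b c "replicate n c @ z"] Suc.prems
  consider (consumed) "b \<noteq> []" "hd b = c" "tl b \<in> ahead (replicate n c @ z)"
    | (appended) "b @ [c] \<in> ahead (replicate n c @ z)"
    by auto
  then show ?case
  proof cases
    case consumed
    then obtain i where i: "i \<le> n" "take i (tl b @ replicate (n - i) c) = replicate i c"
      "drop i (tl b @ replicate (n - i) c) \<in> ahead z" using Suc.IH by blast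
    from consumed have b: "b = c # tl b" by (cases b) auto
    have e: "b @ replicate (Suc n - Suc i) c = c # (tl b @ replicate (n - i) c)"
      by (subst b) simp
    show ?thesis
      by (rule exI[of _ "Suc i"]) (use i in \<open>simp only: e take_Suc_Cons drop_Suc_Cons, simp\<close>)
  next
    case appended
    then obtain i where i: "i \<le> n" "take i ((b @ [c]) @ replicate (n - i) c) = replicate i c"
      "drop i ((b @ [c]) @ replicate (n - i) c) \<in> ahead z" using Suc.IH by blast
    have e: "(b @ [c]) @ replicate (n - i) c = b @ replicate (Suc n - i) c"
      using i(1) by (simp add: Suc_diff_le replicate_append_same[symmetric])
    show ?thesis by (rule exI[of _ i]) (use i e in auto)
  qed
qed

lemma nth_of_take_replicate:
  assumes "take i X = replicate i c" "j < i"
  shows "X ! j = c"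
proof -
  have "i \<le> length X" using arg_cong[OF assms(1), of length] by simp
  then have "take i X ! j = X ! j" using assms(2) by simp
  with assms show ?thesis by simp
qed

lemma ahead_replicate_end:
  assumes "b \<in> ahead (replicate d c)"
  shows "b = replicate (length b) c \<and> length b \<le> d"
proof -
  from ahead_replicate[of b d c "[]"] assms obtain i where i: "i \<le> d"
    "take i (b @ replicate (d - i) c) = replicate i c"
    "drop i (b @ replicate (d - i) c) \<in> ahead []"
    by auto
  from ahead_Nil[OF i(3)] have l: "length b + (d - i) \<le> i" by (simp only: drop_eq_Nil) simp
  have "\<forall>j<length b. b ! j = c"
  proof (intro allI impI)
    fix j assume "j < length b"
    then have "(b @ replicate (d - i) c) ! j = c" using nth_of_take_replicate[OF i(2)] l by auto
    then show "b ! j = c" using \<open>j < length b\<close> by (simp add: nth_append)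
  qed
  then have "b = replicate (length b) c" by (simp add: list_eq_iff_nth_eq)
  with l i show ?thesis by simp
qed

text \<open>After an odd first block  c^a  the two copies cannot be level: the lead is a
  non-empty block of  c, followed by the whole next block  d^P.\<close>

lemma ahead_after_odd_block:
  assumes "[] \<in> ahead (replicate a c @ replicate P d @ z)"
    and "odd a" and "P \<ge> 1" and "c \<noteq> d"
  shows "\<exists>k. 1 \<le> k \<and> k \<le> a \<and> replicate k c @ replicate P d \<in> ahead z"
proof -
  from ahead_replicate[OF assms(1)] obtain i where i: "i \<le> a"
    "take i (replicate (a - i) c) = replicate i c"
    "drop i (replicate (a - i) c) \<in> ahead (replicate P d @ z)"
    by auto
  have "i \<le> a - i" using arg_cong[OF i(2), of length] by simp
  define k where "k = a - 2 * i"
  have k: "1 \<le> k" "k \<le> a" using \<open>odd a\<close> \<open>i \<le> a - i\<close> unfolding k_def by presburger+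
  have "replicate k c \<in> ahead (replicate P d @ z)"
    using i(3) unfolding k_def by (simp add: diff_diff_add mult_2)
  from ahead_replicate[OF this] obtain j where j: "j \<le> P"
    "take j (replicate k c @ replicate (P - j) d) = replicate j d"
    "drop j (replicate k c @ replicate (P - j) d) \<in> ahead z"
    by blast
  have "j = 0"
  proof (rule ccontr)
    assume "j \<noteq> 0"
    then have "(replicate k c @ replicate (P - j) d) ! 0 = d"
      using nth_of_take_replicate[OF j(2)] by simp
    then show False using k(1) \<open>c \<noteq> d\<close> by (simp add: nth_append)
  qed
  then show ?thesis using j(3) k by auto
qed

text \<open>If the lead still starts with  c  when a block of  d  arrives, the slower copy is
  stuck on  c  until the next  c-block, which must exactly cancel the leading  c's.\<close>

lemma ahead_lagging_block:
  assumes "replicate k c @ replicate P d @ replicate t c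
             \<in> ahead (replicate s d @ replicate Q c @ replicate e d)"
    and "k \<ge> 1" and "P \<ge> 1" and "c \<noteq> d"
  shows "t = 0 \<and> Q = k \<and> P + s \<le> e"
proof -
  define b where "b = replicate k c @ replicate P d @ replicate t c"
  from ahead_replicate[of b s d "replicate Q c @ replicate e d"] assms(1)
  obtain j where j: "j \<le> s" "take j (b @ replicate (s - j) d) = replicate j d"
    "drop j (b @ replicate (s - j) d) \<in> ahead (replicate Q c @ replicate e d)"
    unfolding b_def by blast
  have "j = 0"
  proof (rule ccontr)
    assume "j \<noteq> 0"
    then have "(b @ replicate (s - j) d) ! 0 = d" using nth_of_take_replicate[OF j(2)] by simp
    then show False using assms(2,4) by (simp add: nth_append b_def)
  qed
  define b' where "b' = b @ replicate s d"
  have "b' \<in> ahead (replicate Q c @ replicate e d)" using j(3) \<open>j = 0\<close> unfolding b'_def by simp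
  from ahead_replicate[OF this] obtain l where l: "l \<le> Q"
    "take l (b' @ replicate (Q - l) c) = replicate l c"
    "drop l (b' @ replicate (Q - l) c) \<in> ahead (replicate e d)"
    by blast
  define r where "r = drop l (b' @ replicate (Q - l) c)"
  from ahead_replicate_end[of r e d] l(3) have r: "r = replicate (length r) d" "length r \<le> e"
    unfolding r_def by auto
  have no_c: "c \<notin> set r" using assms(4) by (subst r(1)) simp
  have "l \<le> k"
  proof (rule ccontr)
    assume "\<not> l \<le> k"
    then have "(b' @ replicate (Q - l) c) ! k = c" using nth_of_take_replicate[OF l(2)] by simp
    then show False using assms(3,4) by (simp add: nth_append b'_def b_def)
  qed
  moreover have "\<not> l < k"
  proof
    assume "l < k"
    then have "c \<in> set r" unfolding r_def b'_def b_def by simp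
    with no_c show False by simp
  qed
  ultimately have lk: "l = k" by simp
  have r_eq: "r = replicate P d @ replicate t c @ replicate s d @ replicate (Q - l) c"
    unfolding r_def b'_def b_def lk by simp
  have "t = 0" "Q - l = 0" using no_c unfolding r_eq by (auto simp: in_set_replicate)
  moreover have "length r = P + s" using calculation unfolding r_eq by simp
  ultimately show ?thesis using r(2) l(1) lk by simp
qed

lemma ahead_leading_block:
  assumes "replicate P d @ replicate t c \<in> ahead (replicate s d @ replicate Q c @ replicate e d)"
    and "P \<ge> 1" and "Q \<ge> 1" and "c \<noteq> d"
  shows "P \<le> s"
proof (rule ccontr)
  assume "\<not> P \<le> s"
  define b where "b = replicate P d @ replicate t c"
  from ahead_replicate[of b s d "replicate Q c @ replicate e d"] assms(1)
  obtain j where j: "j \<le> s"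
    "drop j (b @ replicate (s - j) d) \<in> ahead (replicate Q c @ replicate e d)"
    unfolding b_def by blast
  define b' where "b' = drop j (b @ replicate (s - j) d)"
  from ahead_replicate[of b' Q c "replicate e d"] j(2) obtain l where l: "l \<le> Q"
    "take l (b' @ replicate (Q - l) c) = replicate l c"
    "drop l (b' @ replicate (Q - l) c) \<in> ahead (replicate e d)"
    unfolding b'_def by blast
  have "j < P" using \<open>\<not> P \<le> s\<close> j(1) by simp
  then have "b' \<noteq> []" "b' ! 0 = d" unfolding b'_def b_def by (simp_all add: nth_append)
  then have "(b' @ replicate (Q - l) c) ! 0 = d" by (simp add: nth_append)
  then have "l = 0" using nth_of_take_replicate[OF l(2), of 0] assms(4) by (cases "l = 0") auto
  then have "c \<in> set (drop l (b' @ replicate (Q - l) c))" using assms(3) by simp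
  moreover have "c \<notin> set (drop l (b' @ replicate (Q - l) c))"
    using ahead_replicate_end[OF l(3)] assms(4) by (metis in_set_replicate)
  ultimately show False by simp
qed

text \<open>The combinatorial core: constraints on a self-shuffle of six alternating blocks
  whose first block has odd length.  (Blocks  t, s  may be empty, so the lemma also
  covers words with four blocks.)\<close>

lemma six_block_self_shuffle:
  assumes mem: "replicate a c @ replicate P d @ replicate t c @ replicate s d @
                replicate Q c @ replicate e d \<in> shuffles x x"
    and "odd a" and "P \<ge> 1" and "Q \<ge> 1" and "c \<noteq> d"
  shows "(P + s \<le> e \<and> t + Q \<le> a) \<or> (t \<ge> 1 \<and> P \<le> s)"
proof -
  from ahead_after_odd_block[OF ahead_start[OF mem, simplified append_assoc] assms(2,3,5)]
  obtain k where k: "1 \<le> k" "k \<le> a"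
    "replicate k c @ replicate P d
       \<in> ahead (replicate t c @ replicate s d @ replicate Q c @ replicate e d)"
    by blast
  from ahead_replicate[OF k(3)] obtain i where i: "i \<le> t"
    "take i ((replicate k c @ replicate P d) @ replicate (t - i) c) = replicate i c"
    "drop i ((replicate k c @ replicate P d) @ replicate (t - i) c)
       \<in> ahead (replicate s d @ replicate Q c @ replicate e d)"
    by blast
  have "i \<le> k"
  proof (rule ccontr)
    assume "\<not> i \<le> k"
    then have "((replicate k c @ replicate P d) @ replicate (t - i) c) ! k = c"
      using nth_of_take_replicate[OF i(2)] by simp
    then show False using assms(3,5) by (simp add: nth_append)
  qed
  show ?thesis
  proof (cases "i < k")
    case True
    have "replicate (k - i) c @ replicate P d @ replicate (t - i) c
            \<in> ahead (replicate s d @ replicate Q c @ replicate e d)"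
      using i(3) \<open>i \<le> k\<close> by simp
    from ahead_lagging_block[OF this _ assms(3,5)] True show ?thesis using i(1) k(2) by auto
  next
    case False
    then have "replicate P d @ replicate (t - k) c
                 \<in> ahead (replicate s d @ replicate Q c @ replicate e d)"
      using i(3) \<open>i \<le> k\<close> by simp
    from ahead_leading_block[OF this assms(3,4,5)] show ?thesis using False \<open>i \<le> k\<close> i(1) k(1)
      by simp
  qed
qed

lemma four_block_self_shuffle:
  assumes "replicate a c @ replicate P d @ replicate Q c @ replicate e d \<in> shuffles x x"
    and "odd a" and "P \<ge> 1" and "Q \<ge> 1" and "c \<noteq> d"
  shows "P \<le> e \<and> Q \<le> a"
  using six_block_self_shuffle[of a c P d 0 0 Q e x] assms by simp

lemma even_filter_self_shuffle: "W \<in> shuffles X X \<Longrightarrow> even (length (filter f W))"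
proof -
  assume "W \<in> shuffles X X"
  then have "filter f W \<in> shuffles (filter f X) (filter f X)"
    using filter_shuffles[of f X X] by blast
  then show ?thesis using length_shuffles by fastforce
qed

lemma split_two_blocks:
  assumes "xs @ ys = replicate \<beta> c @ replicate \<gamma> d"
  shows "\<exists>b1 g1 b2 g2. xs = replicate b1 c @ replicate g1 d \<and> ys = replicate b2 c @ replicate g2 d \<and>
    b1 + b2 = \<beta> \<and> g1 + g2 = \<gamma> \<and> (0 < g1 \<longrightarrow> b2 = 0)"
proof -
  define k where "k = length xs"
  have xs: "xs = take k (replicate \<beta> c @ replicate \<gamma> d)" unfolding k_def using assms[symmetric] by simp
  have ys: "ys = drop k (replicate \<beta> c @ replicate \<gamma> d)" unfolding k_def using assms[symmetric] by simp
  have kl: "k \<le> \<beta> + \<gamma>" unfolding k_def using arg_cong[OF assms, of length] by simp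
  show ?thesis
    by (rule exI[of _ "min k \<beta>"], rule exI[of _ "min (k - \<beta>) \<gamma>"], rule exI[of _ "\<beta> - k"],
        rule exI[of _ "\<gamma> - (k - \<beta>)"]) (use xs ys kl in auto)
qed

lemma split_three_pieces:
  assumes "v @ w @ x = replicate \<beta> c @ replicate \<gamma> d"
  shows "\<exists>b1 g1 b2 g2 b3 g3. v = replicate b1 c @ replicate g1 d \<and>
     w = replicate b2 c @ replicate g2 d \<and> x = replicate b3 c @ replicate g3 d \<and>
     b1 + b2 + b3 = \<beta> \<and> g1 + g2 + g3 = \<gamma> \<and>
     (0 < g1 \<longrightarrow> b2 = 0 \<and> b3 = 0) \<and> (0 < g2 \<longrightarrow> b3 = 0)"
proof -
  from split_two_blocks[OF assms] obtain b1 g1 b' g' where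
    1: "v = replicate b1 c @ replicate g1 d" "w @ x = replicate b' c @ replicate g' d"
    "b1 + b' = \<beta>" "g1 + g' = \<gamma>" "0 < g1 \<longrightarrow> b' = 0" by blast
  from split_two_blocks[OF 1(2)] obtain b2 g2 b3 g3 where
    2: "w = replicate b2 c @ replicate g2 d" "x = replicate b3 c @ replicate g3 d"
    "b2 + b3 = b'" "g2 + g3 = g'" "0 < g2 \<longrightarrow> b3 = 0" by blast
  have s: "b1 + b2 + b3 = \<beta>" "g1 + g2 + g3 = \<gamma>" using 1(3,4) 2(3,4) by auto
  have c: "0 < g1 \<longrightarrow> b2 = 0 \<and> b3 = 0" using 1(5) 2(3) by auto
  show ?thesis using 1(1) 2(1,2,5) s c by blast
qed

lemma replicate_prefix_cases:
  assumes "replicate n c @ R = u @ m @ y"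
  shows "(\<exists>u'. u = replicate n c @ u' \<and> R = u' @ m @ y) \<or>
         (\<exists>\<alpha> \<beta> \<delta>. \<alpha> + \<beta> + \<delta> = n \<and> u = replicate \<alpha> c \<and> m = replicate \<beta> c \<and>
            y = replicate \<delta> c @ R) \<or>
         (\<exists>\<alpha> \<beta> m2. \<alpha> + \<beta> = n \<and> u = replicate \<alpha> c \<and> m = replicate \<beta> c @ m2 \<and>
            m2 \<noteq> [] \<and> R = m2 @ y)"
proof (cases "n \<le> length u")
  case True
  have "take n u = take n (replicate n c @ R)" using assms True by simp
  then have "take n u = replicate n c" by simp
  moreover have "drop n (replicate n c @ R) = drop n (u @ m @ y)" using assms by simp
  then have "R = drop n u @ m @ y" using True by simp
  moreover have "u = take n u @ drop n u" by simp
  ultimately show ?thesis by auto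
next
  case False
  define \<alpha> where "\<alpha> = length u"
  have "take \<alpha> (replicate n c @ R) = u" unfolding \<alpha>_def using assms by simp
  then have u: "u = replicate \<alpha> c" using False unfolding \<alpha>_def by simp
  have "drop \<alpha> (replicate n c @ R) = m @ y" unfolding \<alpha>_def using assms by simp
  then have my: "m @ y = replicate (n - \<alpha>) c @ R" using False unfolding \<alpha>_def by simp
  show ?thesis
  proof (cases "length m \<le> n - \<alpha>")
    case True
    have "take (length m) (m @ y) = m" by simp
    then have m: "m = replicate (length m) c" using my True by simp
    have "drop (length m) (m @ y) = y" by simp
    then have y: "y = replicate (n - \<alpha> - length m) c @ R" using my True by simp
    show ?thesis using u m y True False unfolding \<alpha>_def
      by (intro disjI2 disjI1 exI[of _ "length u"] exI[of _ "length m"] exI[of _ "n - length u - length m"]) auto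
  next
    case False2: False
    have "take (n - \<alpha>) (m @ y) = take (n - \<alpha>) m" using False2 by simp
    then have t: "take (n - \<alpha>) m = replicate (n - \<alpha>) c" using my by simp
    have "drop (n - \<alpha>) (m @ y) = drop (n - \<alpha>) m @ y" using False2 by simp
    then have d: "R = drop (n - \<alpha>) m @ y" using my by simp
    have ne: "drop (n - \<alpha>) m \<noteq> []" using False2 by simp
    have "m = take (n - \<alpha>) m @ drop (n - \<alpha>) m" by simp
    then have "m = replicate (n - \<alpha>) c @ drop (n - \<alpha>) m" using t by simp
    moreover have an: "\<alpha> < n" using False unfolding \<alpha>_def by simp
    ultimately show ?thesis using u d ne
      by (intro disjI2 disjI2 exI[of _ \<alpha>] exI[of _ "n - \<alpha>"] exI[of _ "drop (n - \<alpha>) m"]) auto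
  qed
qed

lemma replicate_prefix_split:
  assumes "replicate n d @ R = m2 @ y" "length m2 \<le> n"
  shows "m2 = replicate (length m2) d \<and> y = replicate (n - length m2) d @ R"
proof -
  have "take (length m2) (replicate n d @ R) = take (length m2) (m2 @ y)" using assms(1) by simp
  then have 1: "m2 = replicate (length m2) d" using assms(2) by simp
  have "drop (length m2) (replicate n d @ R) = drop (length m2) (m2 @ y)" using assms(1) by simp
  then have 2: "y = replicate (n - length m2) d @ R" using assms(2) by simp
  show ?thesis using 1 2 by simp
qed


lemma window_two_blocks:
  assumes z: "replicate n c @ replicate n' d @ R = u @ v @ w @ x @ y"
    and len: "length (v @ w @ x) \<le> n'"
  shows "(\<exists>u'. u = replicate n c @ u' \<and> replicate n' d @ R = u' @ v @ w @ x @ y) \<or>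
    (\<exists>\<alpha> \<delta> b1 b2 b3 g1 g2 g3.
      u = replicate \<alpha> c \<and> v = replicate b1 c @ replicate g1 d \<and>
      w = replicate b2 c @ replicate g2 d \<and> x = replicate b3 c @ replicate g3 d \<and>
      y = replicate \<delta> c @ replicate (n' - (g1 + g2 + g3)) d @ R \<and>
      \<alpha> + (b1 + b2 + b3) + \<delta> = n \<and> (0 < g1 \<longrightarrow> b2 = 0 \<and> b3 = 0) \<and>
      (0 < g2 \<longrightarrow> b3 = 0) \<and> (0 < g1 + g2 + g3 \<longrightarrow> \<delta> = 0))"
proof -
  have "replicate n c @ (replicate n' d @ R) = u @ (v @ w @ x) @ y" using z by simp
  from replicate_prefix_cases[OF this] show ?thesis
  proof (elim disjE exE conjE)
    fix u' assume "u = replicate n c @ u'" "replicate n' d @ R = u' @ (v @ w @ x) @ y"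
    then show ?thesis by simp
  next
    fix \<alpha> \<beta> \<delta> assume h: "\<alpha> + \<beta> + \<delta> = n" "u = replicate \<alpha> c" "v @ w @ x = replicate \<beta> c"
      "y = replicate \<delta> c @ replicate n' d @ R"
    then have "v @ w @ x = replicate \<beta> c @ replicate 0 d" by simp
    from split_three_pieces[OF this] obtain b1 g1 b2 g2 b3 g3 where
      f: "v = replicate b1 c @ replicate g1 d" "w = replicate b2 c @ replicate g2 d"
        "x = replicate b3 c @ replicate g3 d" "b1 + b2 + b3 = \<beta>" "g1 + g2 + g3 = 0"
      by blast
    show ?thesis
      by (rule disjI2, rule exI[of _ \<alpha>], rule exI[of _ \<delta>], rule exI[of _ b1], rule exI[of _ b2],
          rule exI[of _ b3], rule exI[of _ g1], rule exI[of _ g2], rule exI[of _ g3])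
        (use h(1,2,4) f in simp)
  next
    fix \<alpha> \<beta> m2 assume h: "\<alpha> + \<beta> = n" "u = replicate \<alpha> c" "v @ w @ x = replicate \<beta> c @ m2"
      "m2 \<noteq> []" "replicate n' d @ R = m2 @ y"
    have "length m2 \<le> n'" using len arg_cong[OF h(3), of length] by simp
    from replicate_prefix_split[OF h(5) this] have m2: "m2 = replicate (length m2) d"
      "y = replicate (n' - length m2) d @ R" by auto
    from h(3) m2(1) have "v @ w @ x = replicate \<beta> c @ replicate (length m2) d" by simp
    from split_three_pieces[OF this] obtain b1 g1 b2 g2 b3 g3 where
      f: "v = replicate b1 c @ replicate g1 d" "w = replicate b2 c @ replicate g2 d"
        "x = replicate b3 c @ replicate g3 d" "b1 + b2 + b3 = \<beta>" "g1 + g2 + g3 = length m2"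
        "0 < g1 \<longrightarrow> b2 = 0 \<and> b3 = 0" "0 < g2 \<longrightarrow> b3 = 0"
      by blast
    show ?thesis
      by (rule disjI2, rule exI[of _ \<alpha>], rule exI[of _ 0], rule exI[of _ b1], rule exI[of _ b2],
          rule exI[of _ b3], rule exI[of _ g1], rule exI[of _ g2], rule exI[of _ g3])
        (use h(1,2) m2(2) f in simp)
  qed
qed

lemma window_one_block:
  assumes "replicate n c = u @ v @ w @ x @ y"
  shows "u = replicate (length u) c \<and> v = replicate (length v) c \<and> w = replicate (length w) c \<and>
    x = replicate (length x) c \<and> y = replicate (length y) c \<and>
    length u + length v + length w + length x + length y = n"
proof -
  have "\<forall>a\<in>set (u @ v @ w @ x @ y). a = c" by (simp flip: assms)
  then show ?thesis using arg_cong[OF assms, of length]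
    by (simp add: replicate_length_same)
qed

text \<open>The witness is  0^q 1^q 0^q 1^q  with  q  odd.  The next four lemmas show that it
  cannot be pumped by a window lying in the first two blocks, the middle two, the last two
  or the last one:  pumping down (i = 0) or up (i = 2) leaves  ss({0,1}^*) .  Each lemma
  rewrites the pumped word as a six-block word and applies the combinatorial core.\<close>

lemma pump_fails_in_blocks_12:
  fixes q p \<alpha> \<delta> b1 b2 b3 g1 g2 g3 :: nat
  assumes q: "odd q" "p < q"
    and s1: "\<alpha> + (b1 + b2 + b3) + \<delta> = q" and s2: "b1 + b2 + b3 + (g1 + g2 + g3) \<le> p"
    and c1: "0 < g1 \<longrightarrow> b2 = 0 \<and> b3 = 0"
    and c3: "0 < g1 + g2 + g3 \<longrightarrow> \<delta> = 0"
    and ne: "v @ x \<noteq> []"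
    and u: "u = replicate \<alpha> False" and v: "v = replicate b1 False @ replicate g1 True"
    and w: "w = replicate b2 False @ replicate g2 True" and x: "x = replicate b3 False @ replicate g3 True"
    and y: "y = replicate \<delta> False @ replicate (q - (g1 + g2 + g3)) True @ replicate q False @ replicate q True"
    and Z0: "u @ w @ y \<in> shuffles X0 X0" and Z2: "u @ v @ v @ w @ x @ x @ y \<in> shuffles X2 X2"
  shows False
proof -
  define \<gamma> where "\<gamma> = g1 + g2 + g3"
  have "\<gamma> < q" using s2 q(2) unfolding \<gamma>_def by simp
  have down: "u @ w @ y = replicate (\<alpha> + b2 + \<delta>) False @ replicate (g2 + (q - \<gamma>)) True @
      replicate q False @ replicate q True"
    using c3 by (cases "g2 = 0") (simp_all add: u w y \<gamma>_def replicate_add)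
  have "even (length (filter Not (u @ w @ y)))" by (rule even_filter_self_shuffle[OF Z0])
  then have odd_down: "odd (\<alpha> + b2 + \<delta>)" using q(1) by (simp add: down filter_replicate)
  have "q \<le> \<alpha> + b2 + \<delta>"
    using four_block_self_shuffle[OF Z0[unfolded down] odd_down] \<open>\<gamma> < q\<close> odd_pos[OF q(1)] by simp
  then have b13: "b1 = 0" "b3 = 0" using s1 by auto
  have "g1 = 0 \<and> g3 = 0"
  proof (rule ccontr)
    assume g13: "\<not> (g1 = 0 \<and> g3 = 0)"
    then have "\<delta> = 0" using c3 by auto
    have up: "u @ v @ v @ w @ x @ x @ y = replicate (\<alpha> + b2) False @
        replicate (g1 + g1 + g2 + g3 + g3 + (q - \<gamma>)) True @ replicate q False @ replicate q True"
      using c1 \<open>\<delta> = 0\<close> by (cases "g1 = 0") (simp_all add: u v w x y b13 \<gamma>_def replicate_add)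
    have "odd (\<alpha> + b2)" using odd_down \<open>\<delta> = 0\<close> by simp
    from four_block_self_shuffle[OF Z2[unfolded up] this] \<open>\<gamma> < q\<close> odd_pos[OF q(1)]
    have "g1 + g1 + g2 + g3 + g3 + (q - \<gamma>) \<le> q" by simp
    with g13 \<open>\<gamma> < q\<close> show False unfolding \<gamma>_def by linarith
  qed
  then show False using ne b13 v x by simp
qed

lemma pump_fails_in_blocks_23:
  fixes q p \<alpha> \<delta> b1 b2 b3 g1 g2 g3 :: nat
  assumes q: "odd q" "p < q"
    and s1: "\<alpha> + (b1 + b2 + b3) + \<delta> = q" and s2: "b1 + b2 + b3 + (g1 + g2 + g3) \<le> p"
    and c1: "0 < g1 \<longrightarrow> b2 = 0 \<and> b3 = 0" and c2: "0 < g2 \<longrightarrow> b3 = 0"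
    and c3: "0 < g1 + g2 + g3 \<longrightarrow> \<delta> = 0"
    and ne: "v @ x \<noteq> []"
    and u: "u = replicate q False @ replicate \<alpha> True" and v: "v = replicate b1 True @ replicate g1 False"
    and w: "w = replicate b2 True @ replicate g2 False" and x: "x = replicate b3 True @ replicate g3 False"
    and y: "y = replicate \<delta> True @ replicate (q - (g1 + g2 + g3)) False @ replicate q True"
    and Z2: "u @ v @ v @ w @ x @ x @ y \<in> shuffles X2 X2"
  shows False
proof -
  define \<gamma> where "\<gamma> = g1 + g2 + g3"
  have "\<gamma> < q" using s2 q(2) unfolding \<gamma>_def by simp
  have g1: "g1 = 0"
  proof (rule ccontr)
    assume "g1 \<noteq> 0"
    then have z: "b2 = 0" "b3 = 0" "\<delta> = 0" using c1 c3 by auto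
    have "u @ v @ v @ w @ x @ x @ y = replicate q False @ replicate (\<alpha> + b1) True @
        replicate g1 False @ replicate b1 True @ replicate (g1 + g2 + g3 + g3 + (q - \<gamma>)) False @
        replicate q True"
      by (simp add: u v w x y z \<gamma>_def replicate_add)
    from six_block_self_shuffle[OF Z2[unfolded this] q(1)] \<open>g1 \<noteq> 0\<close> \<open>\<gamma> < q\<close> s1 s2 q(2) z
    show False unfolding \<gamma>_def by auto
  qed
  have g3: "g3 = 0"
  proof (rule ccontr)
    assume "g3 \<noteq> 0"
    then have z: "\<delta> = 0" using c3 by auto
    show False
    proof (cases "g2 = 0")
      case True
      have "u @ v @ v @ w @ x @ x @ y = replicate q False @ replicate (\<alpha> + b1 + b1 + b2 + b3) True @
          replicate g3 False @ replicate b3 True @ replicate (g3 + (q - \<gamma>)) False @ replicate q True"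
        by (simp add: u v w x y z g1 True \<gamma>_def replicate_add)
      from six_block_self_shuffle[OF Z2[unfolded this] q(1)] \<open>g3 \<noteq> 0\<close> \<open>\<gamma> < q\<close> s1 s2 q(2)
        z g1 True
      show False unfolding \<gamma>_def by auto
    next
      case False
      then have "b3 = 0" using c2 by simp
      have "u @ v @ v @ w @ x @ x @ y = replicate q False @ replicate (\<alpha> + b1 + b1 + b2) True @
          replicate (g2 + g3 + g3 + (q - \<gamma>)) False @ replicate q True"
        by (simp add: u v w x y z g1 \<open>b3 = 0\<close> \<gamma>_def replicate_add)
      from four_block_self_shuffle[OF Z2[unfolded this] q(1)] \<open>g3 \<noteq> 0\<close> \<open>\<gamma> < q\<close> s1
        z g1 \<open>b3 = 0\<close>
      show False unfolding \<gamma>_def by auto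
    qed
  qed
  have "u @ v @ v @ w @ x @ x @ y = replicate q False @
      replicate (\<alpha> + b1 + b1 + b2 + b3 + b3 + \<delta>) True @ replicate (g2 + (q - \<gamma>)) False @ replicate q True"
    using c2 c3 by (cases "g2 = 0") (simp_all add: u v w x y g1 g3 \<gamma>_def replicate_add)
  from four_block_self_shuffle[OF Z2[unfolded this] q(1)] \<open>\<gamma> < q\<close> s1
  have "b1 = 0" "b3 = 0" by auto
  then show False using ne g1 g3 v x by simp
qed

lemma pump_fails_in_blocks_34:
  fixes q p \<alpha> \<delta> b1 b2 b3 g1 g2 g3 :: nat
  assumes q: "odd q" "p < q"
    and s1: "\<alpha> + (b1 + b2 + b3) + \<delta> = q" and s2: "b1 + b2 + b3 + (g1 + g2 + g3) \<le> p"
    and c2: "0 < g2 \<longrightarrow> b3 = 0"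
    and c3: "0 < g1 + g2 + g3 \<longrightarrow> \<delta> = 0"
    and ne: "v @ x \<noteq> []"
    and u: "u = replicate q False @ replicate q True @ replicate \<alpha> False"
    and v: "v = replicate b1 False @ replicate g1 True"
    and w: "w = replicate b2 False @ replicate g2 True" and x: "x = replicate b3 False @ replicate g3 True"
    and y: "y = replicate \<delta> False @ replicate (q - (g1 + g2 + g3)) True"
    and Z0: "u @ w @ y \<in> shuffles X0 X0" and Z2: "u @ v @ v @ w @ x @ x @ y \<in> shuffles X2 X2"
  shows False
proof -
  define \<gamma> where "\<gamma> = g1 + g2 + g3"
  have "\<gamma> < q" using s2 q(2) unfolding \<gamma>_def by simp
  have "u @ w @ y = replicate q False @ replicate q True @ replicate (\<alpha> + b2 + \<delta>) False @
      replicate (g2 + (q - \<gamma>)) True"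
    using c3 by (cases "g2 = 0") (simp_all add: u w y \<gamma>_def replicate_add)
  from four_block_self_shuffle[OF Z0[unfolded this] q(1)] odd_pos[OF q(1)] s1 s2 q(2)
  have "q \<le> g2 + (q - \<gamma>)" by simp
  then have g13: "g1 = 0" "g3 = 0" using \<open>\<gamma> < q\<close> unfolding \<gamma>_def by auto
  have "u @ v @ v @ w @ x @ x @ y = replicate q False @ replicate q True @
      replicate (\<alpha> + b1 + b1 + b2 + b3 + b3 + \<delta>) False @ replicate (g2 + (q - \<gamma>)) True"
    using c2 c3 by (cases "g2 = 0") (simp_all add: u v w x y g13 \<gamma>_def replicate_add)
  from four_block_self_shuffle[OF Z2[unfolded this] q(1)] odd_pos[OF q(1)] \<open>\<gamma> < q\<close> s1
  have "b1 = 0" "b3 = 0" by auto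
  then show False using ne g13 v x by simp
qed

lemma pump_fails_in_block_4:
  fixes q \<alpha> \<delta> b1 b2 b3 :: nat
  assumes q: "odd q"
    and s1: "\<alpha> + (b1 + b2 + b3) + \<delta> = q"
    and ne: "v @ x \<noteq> []"
    and u: "u = replicate q False @ replicate q True @ replicate q False @ replicate \<alpha> True"
    and v: "v = replicate b1 True" and w: "w = replicate b2 True" and x: "x = replicate b3 True"
    and y: "y = replicate \<delta> True"
    and Z0: "u @ w @ y \<in> shuffles X0 X0"
  shows False
proof -
  have "u @ w @ y = replicate q False @ replicate q True @ replicate q False @
      replicate (\<alpha> + b2 + \<delta>) True"
    by (simp add: u w y replicate_add)
  from four_block_self_shuffle[OF Z0[unfolded this] q] odd_pos[OF q] have "q \<le> \<alpha> + b2 + \<delta>" by simp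
  then have "b1 = 0" "b3 = 0" using s1 by auto
  then show False using ne v x by simp
qed

lemma witness_not_pumpable:
  fixes q p :: nat
  assumes q: "odd q" "p < q"
    and z: "replicate q False @ replicate q True @ replicate q False @ replicate q True =
            u @ v @ w @ x @ y"
    and ne: "v @ x \<noteq> []" and len: "length (v @ w @ x) \<le> p"
    and Z0: "u @ w @ y \<in> shuffles X0 X0" and Z2: "u @ v @ v @ w @ x @ x @ y \<in> shuffles X2 X2"
  shows False
proof -
  have lenq: "length (v @ w @ x) \<le> q" using len q(2) by simp
  have pieces: "b1 + b2 + b3 + (g1 + g2 + g3) \<le> p"
    if "v = replicate b1 a @ replicate g1 a'" "w = replicate b2 a @ replicate g2 a'"
      "x = replicate b3 a @ replicate g3 a'" for b1 b2 b3 g1 g2 g3 and a a' :: bool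
    using len that by simp
  from window_two_blocks[OF z lenq] show False
  proof (elim disjE exE conjE)
    fix \<alpha> \<delta> b1 b2 b3 g1 g2 g3 assume s: "u = replicate \<alpha> False"
      "v = replicate b1 False @ replicate g1 True" "w = replicate b2 False @ replicate g2 True"
      "x = replicate b3 False @ replicate g3 True"
      "y = replicate \<delta> False @ replicate (q - (g1 + g2 + g3)) True @ replicate q False @ replicate q True"
      "\<alpha> + (b1 + b2 + b3) + \<delta> = q" "0 < g1 \<longrightarrow> b2 = 0 \<and> b3 = 0" "0 < g2 \<longrightarrow> b3 = 0"
      "0 < g1 + g2 + g3 \<longrightarrow> \<delta> = 0"
    show False by (rule pump_fails_in_blocks_12[OF q s(6) pieces[OF s(2-4)] s(7) s(9) ne s(1-5) Z0 Z2])
  next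
    fix u1 assume u1: "u = replicate q False @ u1"
      "replicate q True @ replicate q False @ replicate q True = u1 @ v @ w @ x @ y"
    from window_two_blocks[OF u1(2) lenq] show False
    proof (elim disjE exE conjE)
      fix \<alpha> \<delta> b1 b2 b3 g1 g2 g3 assume s: "u1 = replicate \<alpha> True"
        "v = replicate b1 True @ replicate g1 False" "w = replicate b2 True @ replicate g2 False"
        "x = replicate b3 True @ replicate g3 False"
        "y = replicate \<delta> True @ replicate (q - (g1 + g2 + g3)) False @ replicate q True"
        "\<alpha> + (b1 + b2 + b3) + \<delta> = q" "0 < g1 \<longrightarrow> b2 = 0 \<and> b3 = 0" "0 < g2 \<longrightarrow> b3 = 0"
        "0 < g1 + g2 + g3 \<longrightarrow> \<delta> = 0"
      have "u = replicate q False @ replicate \<alpha> True" using u1(1) s(1) by simp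
      from pump_fails_in_blocks_23[OF q s(6) pieces[OF s(2-4)] s(7-9) ne this s(2-5) Z2]
      show False .
    next
      fix u2 assume u2: "u1 = replicate q True @ u2"
        "replicate q False @ replicate q True = u2 @ v @ w @ x @ y"
      have "replicate q False @ replicate q True @ [] = u2 @ v @ w @ x @ y" using u2(2) by simp
      from window_two_blocks[OF this lenq] show False
      proof (elim disjE exE conjE)
        fix \<alpha> \<delta> b1 b2 b3 g1 g2 g3 assume s: "u2 = replicate \<alpha> False"
          "v = replicate b1 False @ replicate g1 True" "w = replicate b2 False @ replicate g2 True"
          "x = replicate b3 False @ replicate g3 True"
          "y = replicate \<delta> False @ replicate (q - (g1 + g2 + g3)) True @ []"
          "\<alpha> + (b1 + b2 + b3) + \<delta> = q" "0 < g1 \<longrightarrow> b2 = 0 \<and> b3 = 0" "0 < g2 \<longrightarrow> b3 = 0"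
          "0 < g1 + g2 + g3 \<longrightarrow> \<delta> = 0"
        have "u = replicate q False @ replicate q True @ replicate \<alpha> False"
          using u1(1) u2(1) s(1) by simp
        moreover have "y = replicate \<delta> False @ replicate (q - (g1 + g2 + g3)) True" using s(5) by simp
        ultimately show False
          using pump_fails_in_blocks_34[OF q s(6) pieces[OF s(2-4)] s(8-9) ne _ s(2-4) _ Z0 Z2]
          by blast
      next
        fix u3 assume u3: "u2 = replicate q False @ u3" "replicate q True @ [] = u3 @ v @ w @ x @ y"
        from window_one_block[of q True u3 v w x y] u3(2) have s:
          "u3 = replicate (length u3) True" "v = replicate (length v) True"
          "w = replicate (length w) True" "x = replicate (length x) True"
          "y = replicate (length y) True"
          "length u3 + (length v + length w + length x) + length y = q"
          by simp_all
        have "u = replicate q False @ replicate q True @ replicate q False @ replicate (length u3) True"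
          using u1(1) u2(1) u3(1) s(1) by simp
        from pump_fails_in_block_4[OF q(1) s(6) ne this s(2-5) Z0] show False .
      qed
    qed
  qed
qed

lemma append_in_shuffles: "xs @ ys \<in> shuffles xs ys"
  by (induction xs) (auto intro: Cons_in_shuffles_leftI)

lemma self_shuffle_UNIV_not_context_free: "\<not> context_free (self_shuffle (UNIV :: bool list set))"
proof
  assume "context_free (self_shuffle (UNIV :: bool list set))"
  then obtain P S where P: "finite P" and L: "self_shuffle (UNIV :: bool list set) = cfg_lang P S"
    unfolding context_free_def by blast
  have in_L: "w \<in> cfg_lang P S \<longleftrightarrow> (\<exists>X. w \<in> shuffles X X)" for w
    unfolding L[symmetric] self_shuffle_def by blast
  from pumping_lemma[OF P, of S] obtain p where pump: "\<forall>w \<in> cfg_lang P S. p < length w \<longrightarrow>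
    (\<exists>u v w' x y. w = u @ v @ w' @ x @ y \<and> v @ x \<noteq> [] \<and> length (v @ w' @ x) \<le> p \<and>
       (\<forall>i. u @ concat (replicate i v) @ w' @ concat (replicate i x) @ y \<in> cfg_lang P S))"
    by blast
  define q where "q = 2 * p + 1"
  have q: "odd q" "p < q" unfolding q_def by auto
  define z where "z = replicate q False @ replicate q True @ replicate q False @ replicate q True"
  have "z \<in> shuffles (replicate q False @ replicate q True) (replicate q False @ replicate q True)"
    unfolding z_def using append_in_shuffles[of "replicate q False @ replicate q True"] by simp
  then have "z \<in> cfg_lang P S" "p < length z" using in_L q(2) by (auto simp: z_def)
  from pump[rule_format, OF this] obtain u v w x y where d: "z = u @ v @ w @ x @ y" "v @ x \<noteq> []"
    "length (v @ w @ x) \<le> p"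
    "\<And>i. u @ concat (replicate i v) @ w @ concat (replicate i x) @ y \<in> cfg_lang P S"
    by blast
  from d(4)[of 0] d(4)[of 2] obtain X0 X2 where
    "u @ w @ y \<in> shuffles X0 X0" "u @ v @ v @ w @ x @ x @ y \<in> shuffles X2 X2"
    by (auto simp: in_L numeral_2_eq_2)
  with witness_not_pumpable[OF q d(1)[unfolded z_def] d(2,3)] show False by blast
qed

lemma regular_UNIV: "regular (UNIV :: 'a list set)"
proof -
  have "foldl (\<lambda>q a. q) (0::nat) w = 0" for w :: "'a list" by (induction w) auto
  then show ?thesis unfolding regular_def by (intro exI[of _ "{0}"] exI[of _ "\<lambda>q a. q"]) auto
qed

theorem mainTheorem1:
  shows "\<not> context_free (self_shuffle (UNIV :: bool list set)) \<and>
         (\<exists>L :: bool list set. regular L \<and> \<not> context_free (self_shuffle L))"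
  using self_shuffle_UNIV_not_context_free regular_UNIV by blast

end
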